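(* For every digraph $X=(V,E)$ and every edge $e\in E$, $u_X(m)=u_{X\setminus e}(m)-u_{X/e}(m)$.
   Context: A digraph $X=(V,E)$: $V$ finite, $E\subset\{(u,v)\in V\times V\mid u\ne v\}$. $\Sigma_V$ is the set of bijections $\sigma:[n]\to V$ ($n=|V|$), $X\mathrm{Des}(\sigma)=\{i\in[n-1]\mid(\sigma_i,\sigma_{i+1})\in E\}$; $F_I=\sum x_{i_1}\cdots x_{i_n}$ over $1\le i_1\le\cdots\le i_n$ with $i_j<i_{j+1}$ for $j\in I$; $U_X=\sum_{\sigma\in\Sigma_V}F_{X\mathrm{Des}(\sigma)}$; the Redei–Berge polynomial is $u_X(m)=U_X(1,\dots,1,0,\dots)$ with $m$ ones (equivalently, the number of pairs $(f,\sigma)$ with $f:V\to[m]$ and $\sigma\in\Sigma_V$ satisfying $f(\sigma_1)\le\cdots\le f(\sigma_n)$ and $f(\sigma_j)<f(\sigma_{j+1})$ whenever $(\sigma_j,\sigma_{j+1})\in E$). Deletion: $X\setminus e=(V,E\setminus\{e\})$. Contraction by $e=(u,v)$: $X/e=(V',E')$ with $V'=(V\setminus\{u,v\})\cup\{e\}$, $E'$ containing all edges of $E$ with both endpoints different from $u,v$, and for $w\ne u,v$: $(w,e)\in E'$ iff $(w,u)\in E$, and $(e,w)\in E'$ iff $(v,w)\in E$ (no other edges). *)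

theory Defs
  imports Main "HOL-Library.FuncSet"
begin

definition digraph :: "'a set \<Rightarrow> ('a \<times> 'a) set \<Rightarrow> bool" where
  "digraph V E \<longleftrightarrow> finite V \<and> E \<subseteq> {(u, v). u \<in> V \<and> v \<in> V \<and> u \<noteq> v}"

definition Sigma_V :: "'a set \<Rightarrow> (nat \<Rightarrow> 'a) set" where
  "Sigma_V V = {\<sigma>. \<sigma> \<in> {1..card V} \<rightarrow>\<^sub>E V \<and> bij_betw \<sigma> {1..card V} V}"

definition redei_berge :: "'a set \<Rightarrow> ('a \<times> 'a) set \<Rightarrow> nat \<Rightarrow> nat" where
  "redei_berge V E m = card {(f, \<sigma>). f \<in> V \<rightarrow>\<^sub>E {1..m} \<and> \<sigma> \<in> Sigma_V V \<and>
      (\<forall>j. 1 \<le> j \<and> j < card V \<longrightarrow>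
          f (\<sigma> j) \<le> f (\<sigma> (Suc j)) \<and>
          ((\<sigma> j, \<sigma> (Suc j)) \<in> E \<longrightarrow> f (\<sigma> j) < f (\<sigma> (Suc j))))}"

definition del_edge :: "('a \<times> 'a) set \<Rightarrow> 'a \<times> 'a \<Rightarrow> ('a \<times> 'a) set" where
  "del_edge E e = E - {e}"

text \<open>Contraction by e = (u, v): the new vertex e is represented by None,
  old vertices w by Some w.\<close>
definition contr_V :: "'a set \<Rightarrow> 'a \<times> 'a \<Rightarrow> 'a option set" where
  "contr_V V e = Some ` (V - {fst e, snd e}) \<union> {None}"

definition contr_E :: "('a \<times> 'a) set \<Rightarrow> 'a \<times> 'a \<Rightarrow> ('a option \<times> 'a option) set" where
  "contr_E E e =
     {(Some a, Some b) | a b. (a, b) \<in> E \<and> a \<notin> {fst e, snd e} \<and> b \<notin> {fst e, snd e}}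
   \<union> {(Some w, None) | w. (w, fst e) \<in> E \<and> w \<notin> {fst e, snd e}}
   \<union> {(None, Some w) | w. (snd e, w) \<in> E \<and> w \<notin> {fst e, snd e}}"

end

theory Submission
  imports Defs
begin

text \<open>Recording a bijection \<open>\<sigma>\<close> as the word \<open>[\<sigma> 1, \<dots>, \<sigma> n]\<close>, \<open>u\<^sub>X(m)\<close> counts pairs \<open>(f, w)\<close>
  where \<open>w\<close> enumerates \<open>V\<close> and \<open>f\<close> is weakly increasing along \<open>w\<close>, strictly across edges of \<open>X\<close>.
  Deleting \<open>e = (u, v)\<close> only relaxes the condition at an occurrence of \<open>u\<close> immediately
  followed by \<open>v\<close>, so the pairs gained are those in which \<open>u v\<close> is a factor of \<open>w\<close> and
  \<open>f u = f v\<close>. Merging this factor into the new vertex of \<open>X/e\<close> is a bijection from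
  the gained pairs onto the pairs counted for \<open>X/e\<close>.\<close>

definition admissible :: "('a \<times> 'a) set \<Rightarrow> ('a \<Rightarrow> nat) \<Rightarrow> 'a \<Rightarrow> 'a \<Rightarrow> bool" where
  "admissible E f a b \<longleftrightarrow> f a \<le> f b \<and> ((a, b) \<in> E \<longrightarrow> f a < f b)"

definition enumerations :: "'a set \<Rightarrow> 'a list set" where
  "enumerations V = {xs. distinct xs \<and> set xs = V}"

definition rb_pairs :: "'a set \<Rightarrow> ('a \<times> 'a) set \<Rightarrow> nat \<Rightarrow> (('a \<Rightarrow> nat) \<times> 'a list) set" where
  "rb_pairs V E m =
     {(f, xs). f \<in> V \<rightarrow>\<^sub>E {1..m} \<and> xs \<in> enumerations V \<and> successively (admissible E f) xs}"

lemma card_pairs_bij_betw: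
  assumes "bij_betw \<phi> A A'" and "bij_betw \<psi> B B'"
    and "\<And>a b. a \<in> A \<Longrightarrow> b \<in> B \<Longrightarrow> R' (\<phi> a) (\<psi> b) \<longleftrightarrow> R a b"
  shows "card {(a, b). a \<in> A \<and> b \<in> B \<and> R a b} = card {(a', b'). a' \<in> A' \<and> b' \<in> B' \<and> R' a' b'}"
proof -
  have bij: "bij_betw (map_prod \<phi> \<psi>) (A \<times> B) (A' \<times> B')"
    using assms(1,2) by (rule bij_betw_map_prod)
  have "bij_betw (map_prod \<phi> \<psi>) {(a, b). a \<in> A \<and> b \<in> B \<and> R a b} {(a', b'). a' \<in> A' \<and> b' \<in> B' \<and> R' a' b'}"
    unfolding bij_betw_def
  proof
    show "inj_on (map_prod \<phi> \<psi>) {(a, b). a \<in> A \<and> b \<in> B \<and> R a b}"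
      using bij unfolding bij_betw_def by (rule inj_on_subset[OF conjunct1]) auto
    show "map_prod \<phi> \<psi> ` {(a, b). a \<in> A \<and> b \<in> B \<and> R a b} = {(a', b'). a' \<in> A' \<and> b' \<in> B' \<and> R' a' b'}"
      using assms unfolding bij_betw_def by (force simp: assms(3))
  qed
  then show ?thesis by (rule bij_betw_same_card)
qed

lemma successively_map_upt:
  "successively P (map \<sigma> [1..<Suc n]) \<longleftrightarrow> (\<forall>j. 1 \<le> j \<and> j < n \<longrightarrow> P (\<sigma> j) (\<sigma> (Suc j)))"
  unfolding successively_conv_nth
  by (auto simp del: upt_Suc simp: nth_upt) (metis Suc_le_D)

lemma bij_betw_Sigma_V_enumerations:
  assumes "finite V"
  shows "bij_betw (\<lambda>\<sigma>. map \<sigma> [1..<Suc (card V)]) (Sigma_V V) (enumerations V)"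
proof -
  define n where "n = card V"
  have "inj_on (\<lambda>\<sigma>. map \<sigma> [1..<Suc n]) (Sigma_V V)"
  proof (rule inj_onI)
    fix \<sigma> \<tau> assume "\<sigma> \<in> Sigma_V V" "\<tau> \<in> Sigma_V V" "map \<sigma> [1..<Suc n] = map \<tau> [1..<Suc n]"
    then show "\<sigma> = \<tau>"
      unfolding Sigma_V_def n_def by (auto simp del: upt_Suc simp: atLeastLessThanSuc_atLeastAtMost intro: PiE_ext)
  qed
  moreover have "map \<sigma> [1..<Suc n] \<in> enumerations V" if "\<sigma> \<in> Sigma_V V" for \<sigma>
    using that unfolding Sigma_V_def enumerations_def bij_betw_def n_def
    by (auto simp del: upt_Suc simp: distinct_map atLeastLessThanSuc_atLeastAtMost)
  moreover have "xs \<in> (\<lambda>\<sigma>. map \<sigma> [1..<Suc n]) ` Sigma_V V" if "xs \<in> enumerations V" for xs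
  proof -
    have xs: "distinct xs" "set xs = V" and len: "length xs = n"
      using that distinct_card unfolding enumerations_def n_def by force+
    define \<sigma> where "\<sigma> = restrict (\<lambda>i. xs ! (i - 1)) {1..n}"
    have "bij_betw ((!) xs \<circ> (\<lambda>i. i - 1)) {1..n} V"
      by (rule bij_betw_trans[OF _ bij_betw_nth])
        (use xs len in \<open>auto intro!: bij_betw_byWitness[where f'=Suc]\<close>)
    then have "bij_betw \<sigma> {1..n} V"
      by (rule bij_betw_cong[THEN iffD1, rotated]) (auto simp: \<sigma>_def)
    then have "\<sigma> \<in> Sigma_V V"
      unfolding Sigma_V_def n_def[symmetric] by (auto simp: \<sigma>_def bij_betw_def)
    moreover have "map \<sigma> [1..<Suc n] = xs"
      by (rule nth_equalityI) (auto simp: \<sigma>_def len simp del: upt_Suc)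
    ultimately show ?thesis by force
  qed
  ultimately show ?thesis
    unfolding n_def bij_betw_def by blast
qed

lemma redei_berge_eq_card_rb_pairs:
  assumes "finite V"
  shows "redei_berge V E m = card (rb_pairs V E m)"
  unfolding redei_berge_def rb_pairs_def
  by (rule card_pairs_bij_betw[OF bij_betw_id bij_betw_Sigma_V_enumerations[OF assms]])
    (simp only: successively_map_upt admissible_def id_apply)

lemma finite_rb_pairs:
  assumes "finite V"
  shows "finite (rb_pairs V E m)"
proof (rule finite_subset)
  show "rb_pairs V E m \<subseteq> (V \<rightarrow>\<^sub>E {1..m}) \<times> {xs. set xs \<subseteq> V \<and> length xs \<le> card V}"
    unfolding rb_pairs_def enumerations_def using distinct_card by fastforce
  show "finite ((V \<rightarrow>\<^sub>E {1..m}) \<times> {xs. set xs \<subseteq> V \<and> length xs \<le> card V})"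
    using assms by (intro finite_cartesian_product finite_PiE finite_lists_length_le) auto
qed

lemma successively_iff_adjacent:
  "successively P xs \<longleftrightarrow> (\<forall>ys a b zs. xs = ys @ a # b # zs \<longrightarrow> P a b)"
proof (induction xs rule: induct_list012)
  case (3 x y zs)
  show ?case
    unfolding successively.simps 3(2)
    by (auto simp: Cons_eq_append_conv) (metis append_Cons append_Nil)+
qed auto

lemma rb_pairs_mono_edges:
  "E' \<subseteq> E \<Longrightarrow> rb_pairs V E m \<subseteq> rb_pairs V E' m"
  unfolding rb_pairs_def admissible_def by (auto elim!: successively_mono)

lemma admissible_del_edge:
  assumes "(u, v) \<in> E" and "admissible (E - {(u, v)}) f a b"
  shows "admissible E f a b \<longleftrightarrow> \<not> (a = u \<and> b = v \<and> f u = f v)"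
  using assms unfolding admissible_def by auto

lemma rb_pairs_del_edge:
  assumes "(u, v) \<in> E"
  shows "rb_pairs V (E - {(u, v)}) m - rb_pairs V E m
           = {(f, xs) \<in> rb_pairs V (E - {(u, v)}) m. f u = f v \<and> (\<exists>ys zs. xs = ys @ u # v # zs)}"
proof -
  have "successively (admissible E f) xs \<longleftrightarrow> \<not> (f u = f v \<and> (\<exists>ys zs. xs = ys @ u # v # zs))"
    if "successively (admissible (E - {(u, v)}) f) xs" for f xs
    using that admissible_del_edge[OF assms] unfolding successively_iff_adjacent by metis
  then show ?thesis
    unfolding rb_pairs_def by auto
qed

definition contract_coloring :: "'a set \<Rightarrow> 'a \<times> 'a \<Rightarrow> ('a \<Rightarrow> nat) \<Rightarrow> 'a option \<Rightarrow> nat" where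
  "contract_coloring V e f = restrict (case_option (f (fst e)) f) (contr_V V e)"

lemma bij_betw_contract_coloring:
  assumes "u \<in> V" and "v \<in> V"
  shows "bij_betw (contract_coloring V (u, v))
           {f \<in> V \<rightarrow>\<^sub>E {1..m}. f u = f v} (contr_V V (u, v) \<rightarrow>\<^sub>E {1..m})"
proof -
  define expand where
    "expand g = restrict (\<lambda>w. if w \<in> {u, v} then g None else g (Some w)) V" for g :: "'a option \<Rightarrow> nat"
  have expand_contract: "expand (contract_coloring V (u, v) f) = f" if "f \<in> V \<rightarrow>\<^sub>E {1..m}" "f u = f v" for f
    using that by (auto simp: expand_def contract_coloring_def contr_V_def PiE_def extensional_def)
  have contract_expand: "contract_coloring V (u, v) (expand g) = g" if "g \<in> contr_V V (u, v) \<rightarrow>\<^sub>E {1..m}" for g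
    using that assms
    by (auto simp: expand_def contract_coloring_def contr_V_def PiE_def extensional_def split: option.splits)
  have contract_mem: "contract_coloring V (u, v) f \<in> contr_V V (u, v) \<rightarrow>\<^sub>E {1..m}" if "f \<in> V \<rightarrow>\<^sub>E {1..m}" for f
    using that assms
    by (auto simp: contract_coloring_def contr_V_def image_iff split: option.splits if_splits)
  have expand_mem: "expand g \<in> {f \<in> V \<rightarrow>\<^sub>E {1..m}. f u = f v}" if "g \<in> contr_V V (u, v) \<rightarrow>\<^sub>E {1..m}" for g
  proof -
    have "(\<lambda>w. if w \<in> {u, v} then g None else g (Some w)) \<in> V \<rightarrow> {1..m}"
      using that unfolding contr_V_def by (auto simp: PiE_iff)
    then show ?thesis
      using assms by (simp add: expand_def)
  qed
  show ?thesis
  proof (rule bij_betw_byWitness[where f'=expand])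
    show "\<forall>f \<in> {f \<in> V \<rightarrow>\<^sub>E {1..m}. f u = f v}. expand (contract_coloring V (u, v) f) = f"
      using expand_contract by simp
    show "\<forall>g \<in> contr_V V (u, v) \<rightarrow>\<^sub>E {1..m}. contract_coloring V (u, v) (expand g) = g"
      using contract_expand by simp
    show "contract_coloring V (u, v) ` {f \<in> V \<rightarrow>\<^sub>E {1..m}. f u = f v} \<subseteq> contr_V V (u, v) \<rightarrow>\<^sub>E {1..m}"
      using contract_mem by (simp add: image_subset_iff)
    show "expand ` (contr_V V (u, v) \<rightarrow>\<^sub>E {1..m}) \<subseteq> {f \<in> V \<rightarrow>\<^sub>E {1..m}. f u = f v}"
      using expand_mem by (rule image_subsetI)
  qed
qed

lemma enumerations_contr_V:
  assumes "u \<in> V" and "v \<in> V" and "u \<noteq> v"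
  shows "enumerations (contr_V V (u, v))
           = (\<lambda>(ys, zs). map Some ys @ None # map Some zs) ` {(ys, zs). ys @ u # v # zs \<in> enumerations V}"
proof (intro set_eqI iffI)
  fix ws assume "ws \<in> enumerations (contr_V V (u, v))"
  then have ws: "distinct ws" "set ws = Some ` (V - {u, v}) \<union> {None}"
    unfolding enumerations_def contr_V_def by auto
  then obtain as bs where ws_split: "ws = as @ None # bs" by (metis UnI2 insertI1 split_list)
  define ys where "ys = map the as"
  define zs where "zs = map the bs"
  have Some_the: "map (Some \<circ> the) l = l" if "None \<notin> set l" for l :: "'a option list"
    using that by (induction l) auto
  have "None \<notin> set as" "None \<notin> set bs" using ws ws_split by auto
  then have "as = map Some ys" "bs = map Some zs"
    unfolding ys_def zs_def map_map by (simp_all add: Some_the)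
  then have ws_eq: "ws = map Some ys @ None # map Some zs"
    using ws_split by simp
  have "Some ` (set ys \<union> set zs) = Some ` (V - {u, v})"
    using ws(2) unfolding ws_eq by auto
  then have "set ys \<union> set zs = V - {u, v}"
    by (simp add: inj_image_eq_iff)
  moreover have "distinct ys" "distinct zs" "set ys \<inter> set zs = {}"
    using ws(1) unfolding ws_eq by (auto simp: distinct_map)
  ultimately have "ys @ u # v # zs \<in> enumerations V"
    using assms unfolding enumerations_def by auto
  then show "ws \<in> (\<lambda>(ys, zs). map Some ys @ None # map Some zs) ` {(ys, zs). ys @ u # v # zs \<in> enumerations V}"
    unfolding ws_eq by (intro image_eqI[of _ _ "(ys, zs)"]) auto
next
  fix ws assume "ws \<in> (\<lambda>(ys, zs). map Some ys @ None # map Some zs) ` {(ys, zs). ys @ u # v # zs \<in> enumerations V}"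
  then obtain ys zs where ws_eq: "ws = map Some ys @ None # map Some zs"
    and yz: "distinct (ys @ u # v # zs)" "set (ys @ u # v # zs) = V"
    unfolding enumerations_def by auto
  have "set ys \<union> set zs = V - {u, v}"
    using yz by auto
  then have "set ws = Some ` (V - {u, v}) \<union> {None}"
    unfolding ws_eq by auto
  moreover have "distinct ws"
    using yz(1) unfolding ws_eq by (auto simp: distinct_map)
  ultimately show "ws \<in> enumerations (contr_V V (u, v))"
    unfolding enumerations_def contr_V_def by simp
qed

lemma successively_contract:
  assumes "u \<noteq> v" and "set ys \<union> set zs \<subseteq> V - {u, v}" and "f u = f v"
  shows "successively (admissible (contr_E E (u, v)) (contract_coloring V (u, v) f))
           (map Some ys @ None # map Some zs)
         \<longleftrightarrow> successively (admissible (E - {(u, v)}) f) (ys @ u # v # zs)"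
    (is "successively ?Q _ \<longleftrightarrow> successively ?P _")
proof -
  have g: "contract_coloring V (u, v) f None = f u"
    "\<And>w. w \<in> V - {u, v} \<Longrightarrow> contract_coloring V (u, v) f (Some w) = f w"
    by (simp_all add: contract_coloring_def contr_V_def)
  have Q_Some_Some: "?Q (Some a) (Some b) \<longleftrightarrow> ?P a b" if "a \<in> V - {u, v}" "b \<in> V - {u, v}" for a b
    using that g by (auto simp: admissible_def contr_E_def)
  have Q_Some_None: "?Q (Some a) None \<longleftrightarrow> ?P a u" if "a \<in> V - {u, v}" for a
    using that g by (auto simp: admissible_def contr_E_def)
  have Q_None_Some: "?Q None (Some b) \<longleftrightarrow> ?P v b" if "b \<in> V - {u, v}" for b
    using that g assms(1,3) by (auto simp: admissible_def contr_E_def)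
  have "?P u v"
    using assms(3) by (simp add: admissible_def)
  moreover have "successively ?Q (map Some ys) \<longleftrightarrow> successively ?P ys"
    "successively ?Q (map Some zs) \<longleftrightarrow> successively ?P zs"
    unfolding successively_map using assms(2) Q_Some_Some
    by (auto intro!: successively_cong)
  moreover have "?Q (last (map Some ys)) None \<longleftrightarrow> ?P (last ys) u" if "ys \<noteq> []"
  proof -
    have "last ys \<in> V - {u, v}"
      using assms(2) last_in_set[OF that] by blast
    then show ?thesis
      using Q_Some_None by (simp add: last_map that)
  qed
  moreover have "?Q None (hd (map Some zs)) \<longleftrightarrow> ?P v (hd zs)" if "zs \<noteq> []"
  proof -
    have "hd zs \<in> V - {u, v}"
      using assms(2) hd_in_set[OF that] by blast
    then show ?thesis
      using Q_None_Some by (simp add: hd_map that)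
  qed
  ultimately show ?thesis
    unfolding successively_append_iff successively_Cons by auto
qed

lemma card_rb_pairs_contract:
  assumes "u \<in> V" and "v \<in> V" and "u \<noteq> v"
  shows "card {(f, xs) \<in> rb_pairs V (E - {(u, v)}) m. f u = f v \<and> (\<exists>ys zs. xs = ys @ u # v # zs)}
           = card (rb_pairs (contr_V V (u, v)) (contr_E E (u, v)) m)"
proof -
  define T where "T = {(ys, zs). ys @ u # v # zs \<in> enumerations V}"
  define merge where "merge = (\<lambda>(ys, zs). ys @ u # v # zs)"
  define merge_contracted :: "'a list \<times> 'a list \<Rightarrow> 'a option list"
    where "merge_contracted = (\<lambda>(ys, zs). map Some ys @ None # map Some zs)"
  have "inj_on merge T"
  proof (rule inj_onI, clarify)
    fix ys zs ys' zs' assume "(ys, zs) \<in> T" and "merge (ys, zs) = merge (ys', zs')"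
    then have "u \<notin> set ys" "u \<notin> set (v # zs)" "ys @ u # v # zs = ys' @ u # v # zs'"
      unfolding T_def merge_def enumerations_def by auto
    then show "ys = ys' \<and> zs = zs'"
      by (simp add: append_Cons_eq_iff)
  qed
  then have bij_merge: "bij_betw merge T (merge ` T)"
    by (rule inj_on_imp_bij_betw)
  have "inj_on merge_contracted T"
  proof (rule inj_onI, clarify)
    fix ys zs ys' zs' assume "merge_contracted (ys, zs) = merge_contracted (ys', zs')"
    then have "map Some ys = map Some ys' \<and> map Some zs = map Some zs'"
      unfolding merge_contracted_def by (simp add: append_Cons_eq_iff)
    then show "ys = ys' \<and> zs = zs'"
      by (simp add: inj_map_eq_map)
  qed
  then have bij_merge_contracted: "bij_betw merge_contracted T (enumerations (contr_V V (u, v)))"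
    unfolding enumerations_contr_V[OF assms] merge_contracted_def T_def by (rule inj_on_imp_bij_betw)
  have "merge ` T = {xs \<in> enumerations V. \<exists>ys zs. xs = ys @ u # v # zs}"
    unfolding merge_def T_def by force
  then have "{(f, xs) \<in> rb_pairs V (E - {(u, v)}) m. f u = f v \<and> (\<exists>ys zs. xs = ys @ u # v # zs)}
      = {(f, xs). f \<in> {f \<in> V \<rightarrow>\<^sub>E {1..m}. f u = f v} \<and> xs \<in> merge ` T
                  \<and> successively (admissible (E - {(u, v)}) f) xs}"
    unfolding rb_pairs_def by auto
  also have "card \<dots> = card {(f, p). f \<in> {f \<in> V \<rightarrow>\<^sub>E {1..m}. f u = f v} \<and> p \<in> T
                  \<and> successively (admissible (E - {(u, v)}) f) (merge p)}"
    by (rule card_pairs_bij_betw[OF bij_betw_id bij_merge, symmetric]) simp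
  also have "\<dots> = card (rb_pairs (contr_V V (u, v)) (contr_E E (u, v)) m)"
    unfolding rb_pairs_def
  proof (rule card_pairs_bij_betw[OF bij_betw_contract_coloring[OF assms(1,2)] bij_merge_contracted])
    fix f p assume f: "f \<in> {f \<in> V \<rightarrow>\<^sub>E {1..m}. f u = f v}" and "p \<in> T"
    then obtain ys zs where p: "p = (ys, zs)" and "ys @ u # v # zs \<in> enumerations V"
      unfolding T_def by auto
    then have "set ys \<union> set zs \<subseteq> V - {u, v}"
      unfolding enumerations_def by auto
    with f show "successively (admissible (contr_E E (u, v)) (contract_coloring V (u, v) f)) (merge_contracted p)
               \<longleftrightarrow> successively (admissible (E - {(u, v)}) f) (merge p)"
      unfolding p merge_def merge_contracted_def by (simp add: successively_contract[OF assms(3)])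
  qed
  finally show ?thesis .
qed

theorem mainTheorem13:
  fixes V :: "'a set" and E :: "('a \<times> 'a) set" and e :: "'a \<times> 'a" and m :: nat
  assumes "digraph V E" and "e \<in> E"
  shows "int (redei_berge V E m)
           = int (redei_berge V (del_edge E e) m) - int (redei_berge (contr_V V e) (contr_E E e) m)"
proof -
  obtain u v where e: "e = (u, v)"
    by (cases e)
  have fin: "finite V" and uv: "u \<in> V" "v \<in> V" "u \<noteq> v" and "(u, v) \<in> E"
    using assms unfolding digraph_def e by auto
  have sub: "rb_pairs V E m \<subseteq> rb_pairs V (E - {(u, v)}) m"
    by (rule rb_pairs_mono_edges) blast
  have "card (rb_pairs V (E - {(u, v)}) m - rb_pairs V E m)
          = card (rb_pairs (contr_V V (u, v)) (contr_E E (u, v)) m)"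
    unfolding rb_pairs_del_edge[OF \<open>(u, v) \<in> E\<close>] by (rule card_rb_pairs_contract[OF uv])
  moreover have "card (rb_pairs V (E - {(u, v)}) m - rb_pairs V E m)
          = card (rb_pairs V (E - {(u, v)}) m) - card (rb_pairs V E m)"
    using finite_subset[OF sub finite_rb_pairs[OF fin]] sub by (rule card_Diff_subset)
  moreover have "card (rb_pairs V E m) \<le> card (rb_pairs V (E - {(u, v)}) m)"
    using finite_rb_pairs[OF fin] sub by (rule card_mono)
  moreover have "finite (contr_V V (u, v))"
    using fin by (simp add: contr_V_def)
  ultimately show ?thesis
    unfolding e del_edge_def by (simp add: redei_berge_eq_card_rb_pairs fin)
qed

end
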